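(* Let $G$ be a finite abelian group with $|G|\ge 2$. Then \[ \mathsf{BO}(|G|-1,G)=\begin{cases}|G|-1, & \text{if } \mathsf{r}_2(G)=1,\\ |G|+1, & \text{otherwise.}\end{cases} \]
   Context: Groups are written additively. For a positive integer $k$, a set $\{g_1,\dots,g_k\}$ of $k$ distinct elements of a finite abelian group $G$ is called $k$-barycentric if $\sum_{i=1}^k g_i = k\,g_j$ for some $1\le j\le k$. The $k$-th barycentric Olson constant $\mathsf{BO}(k,G)$ is the smallest integer $\ell$ such that every subset $A\subseteq G$ with $|A|\ge \ell$ contains a $k$-barycentric subset (so that always $\mathsf{BO}(k,G)\le |G|+1$, the condition being vacuous for $\ell>|G|$). Writing $G\cong \mathbb{Z}/n_1\mathbb{Z}\times\cdots\times\mathbb{Z}/n_r\mathbb{Z}$ with $1<n_1\mid\cdots\mid n_r$, the $2$-rank $\mathsf{r}_2(G)$ is the number of indices $i$ with $2\mid n_i$. *)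

theory Defs
  imports Main
begin

definition nsmul :: "nat \<Rightarrow> 'a::comm_monoid_add \<Rightarrow> 'a" where
  "nsmul k g = (\<Sum>i<k. g)"

definition barycentric :: "nat \<Rightarrow> 'a::comm_monoid_add set \<Rightarrow> bool" where
  "barycentric k B \<longleftrightarrow> finite B \<and> card B = k \<and> (\<exists>g\<in>B. (\<Sum>x\<in>B. x) = nsmul k g)"

definition BO :: "nat \<Rightarrow> 'a::{comm_monoid_add,finite} itself \<Rightarrow> nat" where
  "BO k _ = (LEAST l. \<forall>A::'a set. l \<le> card A \<longrightarrow> (\<exists>B\<subseteq>A. barycentric k B))"

text \<open>The product Z/n_1 x ... x Z/n_r, elements as lists of residues.\<close>
definition cyc_prod :: "nat list \<Rightarrow> nat list set" where
  "cyc_prod ns = {xs. length xs = length ns \<and> (\<forall>i<length ns. xs ! i < ns ! i)}"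

definition cyc_add :: "nat list \<Rightarrow> nat list \<Rightarrow> nat list \<Rightarrow> nat list" where
  "cyc_add ns xs ys = map (\<lambda>i. (xs ! i + ys ! i) mod (ns ! i)) [0..<length ns]"

definition invariant_decomp :: "'a::ab_group_add itself \<Rightarrow> nat list \<Rightarrow> bool" where
  "invariant_decomp _ ns \<longleftrightarrow>
     (\<forall>i<length ns. 1 < ns ! i) \<and>
     (\<forall>i. Suc i < length ns \<longrightarrow> ns ! i dvd ns ! Suc i) \<and>
     (\<exists>f :: 'a \<Rightarrow> nat list. bij_betw f UNIV (cyc_prod ns) \<and>
        (\<forall>a b. f (a + b) = cyc_add ns (f a) (f b)))"

definition rank2 :: "nat list \<Rightarrow> nat" where
  "rank2 ns = card {i. i < length ns \<and> even (ns ! i)}"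

end

theory Submission
  imports Defs
begin

(* Let n = |G| and let s be the sum of all elements of G.

   Since n g = 0 for every g, we have (n-1) g = -g.  An (n-1)-element set is the
   complement G - {a} of a point, with element sum s - a, so it is (n-1)-barycentric iff
   a - s lies in it, i.e. iff s <> 0.  Consequently BO(n-1,G) = n-1 when s <> 0 (every set
   of n-1 elements works, no set of n-2 elements can), and BO(n-1,G) = n+1 when s = 0
   (no (n-1)-barycentric set exists at all).

   It remains to show s <> 0 iff r_2(G) = 1.  Transport s along the isomorphism
   G = Z/n_1 x ... x Z/n_r: its i-th coordinate is the sum of the i-th coordinates of all
   tuples, taken mod n_i.  That sum is Q n_i (n_i - 1)/2 with Q = prod_{j<>i} n_j, and it
   is divisible by n_i unless n_i is even and Q is odd, i.e. unless n_i is the only even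
   invariant factor. *)

lemma nsmul_Suc: "nsmul (Suc k) g = g + nsmul k g"
  by (simp add: nsmul_def add.commute)

lemma sum_constant_nsmul:
  "finite A \<Longrightarrow> (\<Sum>x\<in>A. c) = nsmul (card A) (c::'a::comm_monoid_add)"
  by (induction A rule: finite_induct) (auto simp: nsmul_def add.commute)

(* The exponent of a finite abelian group divides its order: translating by g permutes G,
   so the sum of all elements is unchanged and hence |G| g = 0. *)
lemma nsmul_card_UNIV: "nsmul (card (UNIV::'a set)) (g::'a::{ab_group_add,finite}) = 0"
proof -
  have translate: "bij_betw (\<lambda>x. x + g) UNIV (UNIV::'a set)"
    by (rule bij_betw_byWitness[where f'="\<lambda>x. x - g"]) auto
  have "(\<Sum>x\<in>UNIV. x) = (\<Sum>x\<in>UNIV. x + g)"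
    using sum.reindex_bij_betw[OF translate, of "\<lambda>x. x"] by (rule sym)
  also have "\<dots> = (\<Sum>x\<in>UNIV. x) + nsmul (card (UNIV::'a set)) g"
    by (simp add: sum.distrib sum_constant_nsmul)
  finally show ?thesis by simp
qed

lemma nsmul_card_UNIV_pred: "nsmul (card (UNIV::'a set) - 1) (g::'a::{ab_group_add,finite}) = - g"
proof -
  obtain m where m: "card (UNIV::'a set) = Suc m"
    using finite_UNIV_card_ge_0[where 'a='a] by (metis Suc_pred finite_UNIV)
  have "g + nsmul m g = 0" using nsmul_card_UNIV[of g] unfolding m nsmul_Suc .
  then show ?thesis unfolding m by (simp add: add_eq_0_iff)
qed

lemma contains_point_complement:
  fixes A :: "'a::finite set"
  assumes "card (UNIV::'a set) - 1 \<le> card A"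
  shows "\<exists>a. UNIV - {a} \<subseteq> A"
proof (cases "A = UNIV")
  case False
  then obtain a where a: "a \<notin> A" by blast
  then have sub: "A \<subseteq> UNIV - {a}" by blast
  moreover have "card (UNIV - {a}) \<le> card A"
    using assms by (simp add: card_Diff_singleton)
  ultimately have "A = UNIV - {a}" by (simp add: card_seteq)
  then show ?thesis by blast
qed blast

lemma sum_point_complement:
  "(\<Sum>x\<in>UNIV - {a}. x) = (\<Sum>x\<in>UNIV. x) - (a::'a::{ab_group_add,finite})"
  using sum.remove[of UNIV a "\<lambda>x. x"] by (simp add: algebra_simps)

lemma barycentric_card_pred_iff:
  fixes B :: "'a::{ab_group_add,finite} set"
  shows "barycentric (card (UNIV::'a set) - 1) B \<longleftrightarrow> (\<exists>a. B = UNIV - {a}) \<and> (\<Sum>x\<in>UNIV. x) \<noteq> (0::'a)"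
proof
  assume bary: "barycentric (card (UNIV::'a set) - 1) B"
  then have card_B: "card B = card (UNIV::'a set) - 1" by (simp add: barycentric_def)
  have "\<exists>a. UNIV - {a} \<subseteq> B" by (rule contains_point_complement) (simp add: card_B)
  then obtain a where sub: "UNIV - {a} \<subseteq> B" by blast
  have "card B \<le> card (UNIV - {a})" using card_B by (simp add: card_Diff_singleton)
  then have B: "B = UNIV - {a}" using card_seteq[OF finite sub] by simp
  obtain g where g: "g \<in> B" "(\<Sum>x\<in>B. x) = nsmul (card (UNIV::'a set) - 1) g"
    using bary unfolding barycentric_def by blast
  have "(\<Sum>x\<in>UNIV. x) - a = - g"
    using g(2) unfolding B sum_point_complement nsmul_card_UNIV_pred .
  then have "(\<Sum>x\<in>UNIV. x) = a - g" by (simp add: algebra_simps)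
  moreover have "a \<noteq> g" using B g(1) by blast
  ultimately have "(\<Sum>x\<in>UNIV. x) \<noteq> (0::'a)" by simp
  then show "(\<exists>a. B = UNIV - {a}) \<and> (\<Sum>x\<in>UNIV. x) \<noteq> (0::'a)" using B by blast
next
  assume "(\<exists>a. B = UNIV - {a}) \<and> (\<Sum>x\<in>UNIV. x) \<noteq> (0::'a)"
  then obtain a where B: "B = UNIV - {a}" and s: "(\<Sum>x\<in>UNIV. x) \<noteq> (0::'a)" by blast
  define g where "g = a - (\<Sum>x\<in>UNIV. x)"
  have "(\<Sum>x\<in>B. x) = nsmul (card (UNIV::'a set) - 1) g"
    unfolding nsmul_card_UNIV_pred B sum_point_complement g_def by simp
  moreover have "g \<in> B" using s B g_def by auto
  moreover have "card B = card (UNIV::'a set) - 1" using B by (simp add: card_Diff_singleton)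
  ultimately show "barycentric (card (UNIV::'a set) - 1) B" by (auto simp: barycentric_def)
qed

lemma BO_eqI:
  fixes G :: "'a::{comm_monoid_add,finite} itself" and A\<^sub>0 :: "'a set"
  assumes large: "\<forall>A::'a set. l \<le> card A \<longrightarrow> (\<exists>B\<subseteq>A. barycentric k B)"
    and witness: "card A\<^sub>0 + 1 = l" "\<not> (\<exists>B\<subseteq>A\<^sub>0. barycentric k B)"
  shows "BO k G = l"
  unfolding BO_def
proof (rule Least_equality)
  fix l' assume "\<forall>A::'a set. l' \<le> card A \<longrightarrow> (\<exists>B\<subseteq>A. barycentric k B)"
  then show "l \<le> l'" using witness by (metis Suc_eq_plus1 not_less_eq_eq)
qed (rule large)

(* If s <> 0, every set of n-1 elements is itself (n-1)-barycentric, and no set of n-2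
   elements has an (n-1)-element subset: BO(n-1,G) = n-1. *)
lemma BO_card_pred_nonzero:
  fixes G :: "'a::{ab_group_add,finite} itself"
  assumes two: "card (UNIV::'a set) \<ge> 2" and s: "(\<Sum>x\<in>UNIV. x) \<noteq> (0::'a)"
  shows "BO (card (UNIV::'a set) - 1) G = card (UNIV::'a set) - 1"
proof -
  have large: "\<forall>A::'a set. card (UNIV::'a set) - 1 \<le> card A \<longrightarrow>
      (\<exists>B\<subseteq>A. barycentric (card (UNIV::'a set) - 1) B)"
  proof (intro allI impI)
    fix A :: "'a set" assume "card (UNIV::'a set) - 1 \<le> card A"
    then obtain a where "UNIV - {a} \<subseteq> A" using contains_point_complement by blast
    moreover have "barycentric (card (UNIV::'a set) - 1) (UNIV - {a})"
      unfolding barycentric_card_pred_iff using s by blast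
    ultimately show "\<exists>B\<subseteq>A. barycentric (card (UNIV::'a set) - 1) B" by blast
  qed
  obtain A\<^sub>0 :: "'a set" where A\<^sub>0: "card A\<^sub>0 = card (UNIV::'a set) - 2"
    using obtain_subset_with_card_n[of "card (UNIV::'a set) - 2" "UNIV::'a set"] by auto
  have small: "\<not> (\<exists>B\<subseteq>A\<^sub>0. barycentric (card (UNIV::'a set) - 1) B)"
  proof
    assume "\<exists>B\<subseteq>A\<^sub>0. barycentric (card (UNIV::'a set) - 1) B"
    then obtain B where "B \<subseteq> A\<^sub>0" "card B = card (UNIV::'a set) - 1"
      by (auto simp: barycentric_def)
    then have "card (UNIV::'a set) - 1 \<le> card (UNIV::'a set) - 2"
      using card_mono[of A\<^sub>0 B] A\<^sub>0 by simp
    then show False using two by simp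
  qed
  show ?thesis by (rule BO_eqI[OF large _ small]) (use A\<^sub>0 two in simp)
qed

(* If s = 0, no (n-1)-barycentric set exists, so only the vacuous bound n+1 works. *)
lemma BO_card_pred_zero:
  fixes G :: "'a::{ab_group_add,finite} itself"
  assumes s: "(\<Sum>x\<in>UNIV. x) = (0::'a)"
  shows "BO (card (UNIV::'a set) - 1) G = card (UNIV::'a set) + 1"
proof (rule BO_eqI[where A\<^sub>0 = UNIV])
  show "\<forall>A::'a set. card (UNIV::'a set) + 1 \<le> card A \<longrightarrow>
      (\<exists>B\<subseteq>A. barycentric (card (UNIV::'a set) - 1) B)"
  proof (intro allI impI)
    fix A :: "'a set" assume "card (UNIV::'a set) + 1 \<le> card A"
    moreover have "card A \<le> card (UNIV::'a set)" by (simp add: card_mono)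
    ultimately show "\<exists>B\<subseteq>A. barycentric (card (UNIV::'a set) - 1) B" by simp
  qed
  show "\<not> (\<exists>B\<subseteq>UNIV::'a set. barycentric (card (UNIV::'a set) - 1) B)"
    unfolding barycentric_card_pred_iff using s by blast
qed simp

lemma cyc_add_nth: "i < length ns \<Longrightarrow> cyc_add ns xs ys ! i = (xs ! i + ys ! i) mod ns ! i"
  by (simp add: cyc_add_def)

lemma cyc_prod_Nil: "cyc_prod [] = {[]}"
  by (auto simp: cyc_prod_def)

lemma cyc_prod_Cons: "cyc_prod (n # ns) = (\<lambda>(j, xs). j # xs) ` ({..<n} \<times> cyc_prod ns)"
proof (intro set_eqI iffI)
  fix xs assume "xs \<in> cyc_prod (n # ns)"
  then show "xs \<in> (\<lambda>(j, xs). j # xs) ` ({..<n} \<times> cyc_prod ns)"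
    by (cases xs) (auto simp: cyc_prod_def All_less_Suc2 image_iff)
next
  fix xs assume "xs \<in> (\<lambda>(j, xs). j # xs) ` ({..<n} \<times> cyc_prod ns)"
  then show "xs \<in> cyc_prod (n # ns)"
    by (auto simp: cyc_prod_def All_less_Suc2)
qed

lemma inj_on_Cons_pair: "inj_on (\<lambda>(j, xs). j # xs) A"
  by (auto simp: inj_on_def)

lemma sum_cyc_prod_Cons:
  "(\<Sum>xs\<in>cyc_prod (n # ns). g xs) = (\<Sum>j<n. \<Sum>ys\<in>cyc_prod ns. g (j # ys))"
proof -
  have "(\<Sum>xs\<in>cyc_prod (n # ns). g xs) = (\<Sum>(j, ys)\<in>{..<n} \<times> cyc_prod ns. g (j # ys))"
    unfolding cyc_prod_Cons sum.reindex[OF inj_on_Cons_pair] by (simp add: o_def case_prod_beta)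
  also have "\<dots> = (\<Sum>j<n. \<Sum>ys\<in>cyc_prod ns. g (j # ys))"
    by (rule sum.cartesian_product[symmetric])
  finally show ?thesis .
qed

lemma prod_nth_Cons: "(\<Prod>j<length (n # ns). (n # ns) ! j) = n * (\<Prod>j<length ns. ns ! j)"
  by (simp only: length_Cons prod.lessThan_Suc_shift nth_Cons_0 nth_Cons_Suc)

lemma card_cyc_prod: "card (cyc_prod ns) = (\<Prod>j<length ns. ns ! j)"
proof (induction ns)
  case (Cons n ns)
  have "card (cyc_prod (n # ns)) = card ({..<n} \<times> cyc_prod ns)"
    unfolding cyc_prod_Cons by (rule card_image[OF inj_on_Cons_pair])
  also have "\<dots> = n * card (cyc_prod ns)" by (simp add: card_cartesian_product)
  finally show ?case using Cons by (simp only: prod_nth_Cons)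
qed (simp add: cyc_prod_Nil)

lemma double_sum_lessThan: "2 * (\<Sum>j<n. j) = n * (n - (1::nat))"
proof (induction n)
  case (Suc n)
  have "2 * (\<Sum>j<Suc n. j) = n * (n - 1) + 2 * n" using Suc by simp
  also have "\<dots> = Suc n * n" by (cases n) (auto simp: algebra_simps)
  finally show ?case by simp
qed simp

(* Each residue mod n_i occurs |G|/n_i times as i-th coordinate, so twice the sum of the
   i-th coordinates over all tuples is |G| (n_i - 1). *)
lemma double_sum_coordinate:
  "i < length ns \<Longrightarrow>
     2 * (\<Sum>xs\<in>cyc_prod ns. xs ! i) = (\<Prod>j<length ns. ns ! j) * (ns ! i - 1)"
proof (induction ns arbitrary: i)
  case (Cons n ns)
  show ?case
  proof (cases i)
    case 0
    have "(\<Sum>xs\<in>cyc_prod (n # ns). xs ! i) = card (cyc_prod ns) * (\<Sum>j<n. j)"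
      using 0 by (simp add: sum_cyc_prod_Cons sum_distrib_left)
    then have "2 * (\<Sum>xs\<in>cyc_prod (n # ns). xs ! i) = card (cyc_prod ns) * (n * (n - 1))"
      using double_sum_lessThan[of n] by simp
    then show ?thesis
      unfolding prod_nth_Cons card_cyc_prod using 0 by simp
  next
    case (Suc i')
    have "(\<Sum>xs\<in>cyc_prod (n # ns). xs ! i) = n * (\<Sum>ys\<in>cyc_prod ns. ys ! i')"
      using Suc by (simp add: sum_cyc_prod_Cons)
    then have "2 * (\<Sum>xs\<in>cyc_prod (n # ns). xs ! i) = n * (2 * (\<Sum>ys\<in>cyc_prod ns. ys ! i'))"
      by simp
    also have "\<dots> = n * ((\<Prod>j<length ns. ns ! j) * (ns ! i' - 1))"
      using Cons.IH[of i'] Cons.prems Suc by simp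
    finally show ?thesis
      unfolding prod_nth_Cons using Suc by (simp only: mult.assoc nth_Cons_Suc)
  qed
qed simp

lemma half_multiple_dvd_iff:
  fixes n Q s :: nat
  assumes "n \<ge> 1" and "2 * s = n * Q * (n - 1)"
  shows "n dvd s \<longleftrightarrow> \<not> (even n \<and> odd Q)"
proof -
  have "n dvd s \<longleftrightarrow> 2 * n dvd 2 * s" by simp
  also have "\<dots> \<longleftrightarrow> n * 2 dvd n * (Q * (n - 1))"
    unfolding assms(2) by (simp only: mult.commute[of 2 n] mult.assoc)
  also have "\<dots> \<longleftrightarrow> even (Q * (n - 1))"
    using assms(1) by simp
  also have "\<dots> \<longleftrightarrow> \<not> (even n \<and> odd Q)"
    using assms(1) by auto
  finally show ?thesis .
qed

lemma rank2_eq_1_iff: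
  "rank2 ns = 1 \<longleftrightarrow> (\<exists>i<length ns. even (ns ! i) \<and> (\<forall>j<length ns. j \<noteq> i \<longrightarrow> odd (ns ! j)))"
proof
  assume "rank2 ns = 1"
  then obtain i where i: "{i. i < length ns \<and> even (ns ! i)} = {i}"
    unfolding rank2_def by (metis One_nat_def card_1_singleton_iff)
  then show "\<exists>i<length ns. even (ns ! i) \<and> (\<forall>j<length ns. j \<noteq> i \<longrightarrow> odd (ns ! j))"
    by blast
next
  assume "\<exists>i<length ns. even (ns ! i) \<and> (\<forall>j<length ns. j \<noteq> i \<longrightarrow> odd (ns ! j))"
  then obtain i where "{i. i < length ns \<and> even (ns ! i)} = {i}" by blast
  then show "rank2 ns = 1" unfolding rank2_def by simp
qed

lemma mod_double_eq_self: assumes "(c::nat) < n" and "(c + c) mod n = c" shows "c = 0"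
proof (cases "c + c < n")
  case False
  then have "(c + c) mod n = c + c - n" using assms(1) by (simp add: le_mod_geq)
  then show ?thesis using assms by simp
qed (use assms in simp)

lemma hom_zero_coordinate:
  fixes f :: "'a::monoid_add \<Rightarrow> nat list"
  assumes hom: "\<forall>a b. f (a + b) = cyc_add ns (f a) (f b)"
    and range: "f 0 \<in> cyc_prod ns" and i: "i < length ns"
  shows "f 0 ! i = 0"
proof (rule mod_double_eq_self)
  have "f 0 = cyc_add ns (f 0) (f 0)" using hom[rule_format, of 0 0] by (simp only: add_0)
  then show "(f 0 ! i + f 0 ! i) mod ns ! i = f 0 ! i"
    unfolding cyc_add_nth[OF i, symmetric] by (rule arg_cong[symmetric])
  show "f 0 ! i < ns ! i" using range i by (simp add: cyc_prod_def)
qed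

lemma hom_sum_coordinate:
  fixes f :: "'a::comm_monoid_add \<Rightarrow> nat list"
  assumes hom: "\<forall>a b. f (a + b) = cyc_add ns (f a) (f b)"
    and range: "\<forall>x. f x \<in> cyc_prod ns" and i: "i < length ns" and "finite A"
  shows "f (\<Sum>x\<in>A. x) ! i = (\<Sum>x\<in>A. f x ! i) mod ns ! i"
  using \<open>finite A\<close>
proof (induction A rule: finite_induct)
  case empty
  then show ?case using hom_zero_coordinate[OF hom _ i] range by simp
next
  case (insert x F)
  have "f (\<Sum>y\<in>insert x F. y) = cyc_add ns (f x) (f (\<Sum>y\<in>F. y))"
    using insert.hyps hom by simp
  then have "f (\<Sum>y\<in>insert x F. y) ! i = (f x ! i + (\<Sum>y\<in>F. f y ! i) mod ns ! i) mod ns ! i"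
    using insert.IH by (simp add: cyc_add_nth[OF i])
  also have "\<dots> = (\<Sum>y\<in>insert x F. f y ! i) mod ns ! i"
    using insert.hyps by (simp add: mod_add_right_eq)
  finally show ?case .
qed

lemma sum_UNIV_coordinate_zero_iff:
  fixes f :: "'a::{comm_monoid_add,finite} \<Rightarrow> nat list"
  assumes pos: "\<forall>i<length ns. 1 < ns ! i"
    and bij: "bij_betw f UNIV (cyc_prod ns)"
    and hom: "\<forall>a b. f (a + b) = cyc_add ns (f a) (f b)"
    and i: "i < length ns"
  shows "f (\<Sum>x\<in>UNIV. x) ! i = 0 \<longleftrightarrow> \<not> (even (ns ! i) \<and> (\<forall>j<length ns. j \<noteq> i \<longrightarrow> odd (ns ! j)))"
proof -
  define Q where "Q = (\<Prod>j\<in>{..<length ns} - {i}. ns ! j)"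
  define t where "t = (\<Sum>xs\<in>cyc_prod ns. xs ! i)"
  have range: "\<forall>x. f x \<in> cyc_prod ns" using bij_betw_apply[OF bij] by blast
  have "f (\<Sum>x\<in>UNIV. x) ! i = (\<Sum>x\<in>UNIV. f x ! i) mod ns ! i"
    using hom_sum_coordinate[OF hom range i] by simp
  also have "(\<Sum>x\<in>UNIV. f x ! i) = t"
    unfolding t_def using sum.reindex_bij_betw[OF bij, of "\<lambda>xs. xs ! i"] by simp
  finally have zero_iff: "f (\<Sum>x\<in>UNIV. x) ! i = 0 \<longleftrightarrow> ns ! i dvd t"
    by (simp add: dvd_eq_mod_eq_0)
  have t_eq: "2 * t = ns ! i * Q * (ns ! i - 1)"
    unfolding t_def Q_def using double_sum_coordinate[OF i] i by (simp add: prod.remove)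
  have Q_odd: "odd Q \<longleftrightarrow> (\<forall>j<length ns. j \<noteq> i \<longrightarrow> odd (ns ! j))"
    unfolding Q_def by (auto simp: even_prod_iff)
  have "1 \<le> ns ! i" using pos i by auto
  show ?thesis unfolding zero_iff half_multiple_dvd_iff[OF \<open>1 \<le> ns ! i\<close> t_eq] Q_odd ..
qed

lemma sum_UNIV_nonzero_iff_rank2:
  fixes G :: "'a::{ab_group_add,finite} itself"
  assumes "invariant_decomp G ns"
  shows "(\<Sum>x\<in>UNIV. x) \<noteq> (0::'a) \<longleftrightarrow> rank2 ns = 1"
proof -
  obtain f :: "'a \<Rightarrow> nat list" where pos: "\<forall>i<length ns. 1 < ns ! i"
    and bij: "bij_betw f UNIV (cyc_prod ns)" and hom: "\<forall>a b. f (a + b) = cyc_add ns (f a) (f b)"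
    using assms unfolding invariant_decomp_def by blast
  have range: "\<And>x. f x \<in> cyc_prod ns" using bij_betw_apply[OF bij] by blast
  have zero: "\<And>i. i < length ns \<Longrightarrow> f 0 ! i = 0" using hom_zero_coordinate[OF hom range] .
  have "(\<Sum>x\<in>UNIV. x) = (0::'a) \<longleftrightarrow> f (\<Sum>x\<in>UNIV. x) = f 0"
    using bij_betw_imp_inj_on[OF bij] by (auto simp: inj_on_def)
  also have "\<dots> \<longleftrightarrow> (\<forall>i<length ns. f (\<Sum>x\<in>UNIV. x) ! i = 0)"
    using range[of 0] range[of "\<Sum>x\<in>UNIV. x"] zero
    by (auto simp: cyc_prod_def intro: nth_equalityI)
  also have "\<dots> \<longleftrightarrow> rank2 ns \<noteq> 1"
    unfolding rank2_eq_1_iff by (auto simp: sum_UNIV_coordinate_zero_iff[OF pos bij hom])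
  finally show ?thesis by blast
qed

theorem mainTheorem1:
  fixes ns :: "nat list"
    and G :: "'a::{ab_group_add,finite} itself"
  assumes "card (UNIV :: 'a set) \<ge> 2"
    and "invariant_decomp G ns"
  shows "BO (card (UNIV :: 'a set) - 1) G =
           (if rank2 ns = 1 then card (UNIV :: 'a set) - 1 else card (UNIV :: 'a set) + 1)"
proof (cases "rank2 ns = 1")
  case True
  then have "(\<Sum>x\<in>UNIV. x) \<noteq> (0::'a)" using sum_UNIV_nonzero_iff_rank2[OF assms(2)] by blast
  then show ?thesis using BO_card_pred_nonzero[OF assms(1)] True by simp
next
  case False
  then have "(\<Sum>x\<in>UNIV. x) = (0::'a)" using sum_UNIV_nonzero_iff_rank2[OF assms(2)] by blast
  then show ?thesis using BO_card_pred_zero False by simp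
qed

end
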